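(* Let $N,k$ be positive integers, $p_1,\dots,p_N$ primes with all $p_i>2$, and $s_1,\dots,s_N$ positive integers. Then the group $\mathbb{Z}_{p_1^{s_1}\cdots p_N^{s_N}}\mathbin{\mathrm{wr}}\mathbb{Z}^{2k}$ admits an automorphism with finite Reidemeister number.
   Context: $\mathbb{Z}_q\mathbin{\mathrm{wr}}\mathbb{Z}^d=\bigoplus_{x\in\mathbb{Z}^d}(\mathbb{Z}_q)_x\rtimes\mathbb{Z}^d$ is the restricted wreath product with $\mathbb{Z}^d$ acting by shifting indices. The Reidemeister number $R(\varphi)$ of an automorphism $\varphi$ of a group $G$ is the number of equivalence classes of the relation $g_1\sim hg_2\varphi(h^{-1})$, $h\in G$. *)

theory Defs
  imports "HOL-Algebra.Algebra"
begin

text \<open>The lattice Z^d, represented as integer vectors indexed by nat that vanish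
  from index d onwards.\<close>
definition Zvec :: "nat \<Rightarrow> (nat \<Rightarrow> int) set" where
  "Zvec d = {v. \<forall>i\<ge>d. v i = 0}"

definition lamps :: "nat \<Rightarrow> nat \<Rightarrow> ((nat \<Rightarrow> int) \<Rightarrow> int) set" where
  "lamps q d = {f. (\<forall>x. f x \<in> {0..<int q}) \<and> (\<forall>x. x \<notin> Zvec d \<longrightarrow> f x = 0)
                   \<and> finite {x. f x \<noteq> 0}}"

text \<open>Restricted wreath product Z_q wr Z^d = (direct sum of copies of Z_q over Z^d)
  semidirect Z^d, with Z^d acting by shifting indices:
  (f,v)(g,w) = (f + g(. - v), v + w).\<close>
definition wreath :: "nat \<Rightarrow> nat \<Rightarrow> (((nat \<Rightarrow> int) \<Rightarrow> int) \<times> (nat \<Rightarrow> int)) monoid" where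
  "wreath q d = \<lparr> carrier = lamps q d \<times> Zvec d,
     monoid.mult = (\<lambda>(f, v) (g, w). ((\<lambda>x. (f x + g (\<lambda>i. x i - v i)) mod int q), (\<lambda>i. v i + w i))),
     one = ((\<lambda>x. 0), (\<lambda>i. 0)) \<rparr>"

definition twisted_conj :: "('a, 'b) monoid_scheme \<Rightarrow> ('a \<Rightarrow> 'a) \<Rightarrow> ('a \<times> 'a) set" where
  "twisted_conj G \<phi> = {(g1, g2). g1 \<in> carrier G \<and> g2 \<in> carrier G \<and>
      (\<exists>h\<in>carrier G. g1 = h \<otimes>\<^bsub>G\<^esub> g2 \<otimes>\<^bsub>G\<^esub> \<phi> (inv\<^bsub>G\<^esub> h))}"

definition reidemeister_classes :: "('a, 'b) monoid_scheme \<Rightarrow> ('a \<Rightarrow> 'a) \<Rightarrow> 'a set set" where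
  "reidemeister_classes G \<phi> = carrier G // twisted_conj G \<phi>"

end

theory Submission
  imports Defs "HOL-Computational_Algebra.Primes"
begin

(* Let M act on each coordinate plane of Z^2k by the matrix [[0,-1],[1,-1]], which has order 3
   and satisfies I + M + M^2 = 0, and let phi (f, v) = (- f o M^-1, M v).  Twisting by (e, w)
   changes the Z^2k-component by (I - M) w; as det (I - M) = 3 on each plane, every element is
   twisted conjugate to one whose Z^2k-component has coordinates in {0, 1, 2}.  What remains for
   the lamp component is the equation e = f - e o B with B a permutation of order 3, which is
   solved by e = (f - f o B + f o B^2) / 2 because q is odd.  So finitely many elements (0, u)
   meet every Reidemeister class. *)

lemma Zvec_add: "v \<in> Zvec d \<Longrightarrow> w \<in> Zvec d \<Longrightarrow> (\<lambda>i. v i + w i) \<in> Zvec d"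
  and Zvec_uminus: "v \<in> Zvec d \<Longrightarrow> (\<lambda>i. - v i) \<in> Zvec d"
  by (auto simp: Zvec_def)

lemma Zvec_diff_iff: "v \<in> Zvec d \<Longrightarrow> (\<lambda>i. x i - v i) \<in> Zvec d \<longleftrightarrow> x \<in> Zvec d"
  and Zvec_add_iff: "v \<in> Zvec d \<Longrightarrow> (\<lambda>i. x i + v i) \<in> Zvec d \<longleftrightarrow> x \<in> Zvec d"
  by (auto simp: Zvec_def)

lemma finite_Zvec_range: "finite B \<Longrightarrow> finite {u \<in> Zvec d. range u \<subseteq> B}"
  by (rule finite_subset[OF _ finite_set_of_finite_funs[of "{..<d}" B 0]]) (auto simp: Zvec_def)

lemma finite_support_comp:
  "finite {y. f y \<noteq> 0} \<Longrightarrow> inj G \<Longrightarrow> finite {x. f (G x) \<noteq> 0}"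
  using finite_vimageI[of "{y. f y \<noteq> 0}" G] by (simp add: vimage_def)

lemma finite_support_add:
  "finite {x. a x \<noteq> 0} \<Longrightarrow> finite {x. b x \<noteq> 0} \<Longrightarrow> finite {x. a x + b x \<noteq> (0::'b::monoid_add)}"
  by (rule finite_subset[of _ "{x. a x \<noteq> 0} \<union> {x. b x \<noteq> 0}"]) auto

lemma lamps_modI:
  assumes "q > 0" "finite {x. g x \<noteq> 0}" "\<And>x. x \<notin> Zvec d \<Longrightarrow> g x = 0"
  shows "(\<lambda>x. g x mod int q) \<in> lamps q d"
  using assms by (auto simp: lamps_def elim!: rev_finite_subset)

lemma lamps_neg_comp:
  assumes "q > 0" "f \<in> lamps q d" "inj G" "\<And>x. G x \<in> Zvec d \<Longrightarrow> x \<in> Zvec d"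
  shows "(\<lambda>x. (- f (G x)) mod int q) \<in> lamps q d"
  using assms finite_support_comp[of f G] by (intro lamps_modI) (auto simp: lamps_def)

lemma lamps_mod: "f \<in> lamps q d \<Longrightarrow> f x mod int q = f x"
  by (simp add: lamps_def)

lemma wreath_mult: "(f, v) \<otimes>\<^bsub>wreath q d\<^esub> (g, w) = ((\<lambda>x. (f x + g (\<lambda>i. x i - v i)) mod int q), (\<lambda>i. v i + w i))"
  and wreath_one: "\<one>\<^bsub>wreath q d\<^esub> = ((\<lambda>x. 0), (\<lambda>i. 0))"
  and wreath_carrier: "carrier (wreath q d) = lamps q d \<times> Zvec d"
  by (simp_all add: wreath_def)

lemma wreath_group:
  assumes "q > 0"
  shows "group (wreath q d)"
proof (rule groupI)
  fix x y assume "x \<in> carrier (wreath q d)" "y \<in> carrier (wreath q d)"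
  then obtain f v g w where xy: "x = (f, v)" "y = (g, w)"
    and f: "f \<in> lamps q d" "v \<in> Zvec d" and g: "g \<in> lamps q d" "w \<in> Zvec d"
    by (auto simp: wreath_carrier)
  have "inj (\<lambda>x i. x i - v i :: int)"
    by (auto simp: inj_def fun_eq_iff)
  then have "finite {x. g (\<lambda>i. x i - v i) \<noteq> 0}"
    using g finite_support_comp[of g "\<lambda>x i. x i - v i"] by (simp add: lamps_def)
  then have "finite {x. f x + g (\<lambda>i. x i - v i) \<noteq> 0}"
    using f by (intro finite_support_add) (simp_all add: lamps_def)
  then have "(\<lambda>x. (f x + g (\<lambda>i. x i - v i)) mod int q) \<in> lamps q d"
    using assms f g by (intro lamps_modI) (auto simp: lamps_def Zvec_diff_iff)
  then show "x \<otimes>\<^bsub>wreath q d\<^esub> y \<in> carrier (wreath q d)"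
    using f g by (simp add: xy wreath_mult wreath_carrier Zvec_add)
next
  show "\<one>\<^bsub>wreath q d\<^esub> \<in> carrier (wreath q d)"
    using assms by (auto simp: wreath_one wreath_carrier lamps_def Zvec_def)
next
  fix x y z assume "x \<in> carrier (wreath q d)" "y \<in> carrier (wreath q d)" "z \<in> carrier (wreath q d)"
  obtain f v g w h u where "x = (f, v)" "y = (g, w)" "z = (h, u)"
    by (metis surj_pair)
  moreover have "(\<lambda>i. y i - (v i + w i)) = (\<lambda>i. (y i - v i) - w i)" for y :: "nat \<Rightarrow> int"
    by auto
  ultimately show "x \<otimes>\<^bsub>wreath q d\<^esub> y \<otimes>\<^bsub>wreath q d\<^esub> z = x \<otimes>\<^bsub>wreath q d\<^esub> (y \<otimes>\<^bsub>wreath q d\<^esub> z)"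
    by (simp add: wreath_mult mod_add_left_eq mod_add_right_eq add.assoc)
next
  fix x assume "x \<in> carrier (wreath q d)"
  then obtain f v where x: "x = (f, v)" and f: "f \<in> lamps q d" "v \<in> Zvec d"
    by (auto simp: wreath_carrier)
  then show "\<one>\<^bsub>wreath q d\<^esub> \<otimes>\<^bsub>wreath q d\<^esub> x = x"
    by (simp add: wreath_mult wreath_one lamps_mod)
  let ?y = "((\<lambda>x. (- f (\<lambda>i. x i + v i)) mod int q), (\<lambda>i. - v i))"
  have "(\<lambda>x. (- f (\<lambda>i. x i + v i)) mod int q) \<in> lamps q d"
    using f(2) by (intro lamps_neg_comp[OF assms f(1)]) (auto simp: inj_def fun_eq_iff Zvec_add_iff)
  then have "?y \<in> carrier (wreath q d)"
    using f by (simp add: wreath_carrier Zvec_uminus)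
  moreover have "?y \<otimes>\<^bsub>wreath q d\<^esub> x = \<one>\<^bsub>wreath q d\<^esub>"
    by (simp add: x wreath_mult wreath_one mod_add_left_eq)
  ultimately show "\<exists>y\<in>carrier (wreath q d). y \<otimes>\<^bsub>wreath q d\<^esub> x = \<one>\<^bsub>wreath q d\<^esub>"
    by blast
qed

lemma twisted_conj_equiv:
  fixes G (structure)
  assumes "group G" and "\<phi> \<in> hom G G"
  shows "equiv (carrier G) (twisted_conj G \<phi>)"
proof -
  interpret group_hom G G \<phi>
    using assms by (simp add: group_hom_def group_hom_axioms_def)
  show ?thesis
  proof (rule equivI)
    show "refl_on (carrier G) (twisted_conj G \<phi>)"
      by (rule refl_onI) (auto simp: twisted_conj_def intro!: bexI[where x = "\<one>"])
  next
    show "sym (twisted_conj G \<phi>)"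
    proof (rule symI)
      fix a b assume "(a, b) \<in> twisted_conj G \<phi>"
      then obtain h where "a \<in> carrier G" "b \<in> carrier G" "h \<in> carrier G"
        and "a = h \<otimes> b \<otimes> \<phi> (inv h)"
        by (auto simp: twisted_conj_def)
      then have "b = inv h \<otimes> a \<otimes> \<phi> (inv (inv h))"
        by (simp add: G.m_assoc G.inv_solve_left G.inv_solve_right)
      with \<open>a \<in> carrier G\<close> \<open>b \<in> carrier G\<close> \<open>h \<in> carrier G\<close>
      show "(b, a) \<in> twisted_conj G \<phi>"
        unfolding twisted_conj_def by blast
    qed
  next
    show "trans (twisted_conj G \<phi>)"
    proof (rule transI)
      fix a b c assume "(a, b) \<in> twisted_conj G \<phi>" "(b, c) \<in> twisted_conj G \<phi>"
      then obtain h k where "a \<in> carrier G" "c \<in> carrier G" "h \<in> carrier G" "k \<in> carrier G"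
        and "a = h \<otimes> (k \<otimes> c \<otimes> \<phi> (inv k)) \<otimes> \<phi> (inv h)"
        by (auto simp: twisted_conj_def)
      then have "a = (h \<otimes> k) \<otimes> c \<otimes> \<phi> (inv (h \<otimes> k))"
        by (simp add: G.m_assoc G.inv_mult_group)
      with \<open>a \<in> carrier G\<close> \<open>c \<in> carrier G\<close> \<open>h \<in> carrier G\<close> \<open>k \<in> carrier G\<close>
      show "(a, c) \<in> twisted_conj G \<phi>"
        unfolding twisted_conj_def by blast
    qed
  qed (auto simp: twisted_conj_def)
qed

lemma twisted_conjI:
  fixes G (structure)
  assumes "group G" and "\<phi> \<in> hom G G"
    and "g \<in> carrier G" "h \<in> carrier G" "g' \<in> carrier G"
    and "g \<otimes> \<phi> h = h \<otimes> g'"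
  shows "(g, g') \<in> twisted_conj G \<phi>"
proof -
  interpret group_hom G G \<phi>
    using assms by (simp add: group_hom_def group_hom_axioms_def)
  have "g = g \<otimes> \<phi> h \<otimes> inv (\<phi> h)"
    using assms(3,4) by (simp add: G.m_assoc)
  also have "\<dots> = h \<otimes> g' \<otimes> inv (\<phi> h)"
    by (simp only: assms(6))
  also have "\<dots> = h \<otimes> g' \<otimes> \<phi> (inv h)"
    using assms by simp
  finally show ?thesis
    using assms unfolding twisted_conj_def by blast
qed

lemma finite_reidemeister_classesI:
  assumes "group G" and "\<phi> \<in> hom G G"
    and "finite S" and "S \<subseteq> carrier G"
    and "\<And>g. g \<in> carrier G \<Longrightarrow> \<exists>s\<in>S. (g, s) \<in> twisted_conj G \<phi>"
  shows "finite (reidemeister_classes G \<phi>)"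
proof -
  have "reidemeister_classes G \<phi> \<subseteq> (\<lambda>s. twisted_conj G \<phi> `` {s}) ` S"
  proof
    fix Y assume "Y \<in> reidemeister_classes G \<phi>"
    then obtain g where "g \<in> carrier G" and Y: "Y = twisted_conj G \<phi> `` {g}"
      by (auto simp: reidemeister_classes_def elim: quotientE)
    then obtain s where "s \<in> S" and "(g, s) \<in> twisted_conj G \<phi>"
      using assms(5) by blast
    then have "Y = twisted_conj G \<phi> `` {s}"
      using Y equiv_class_eq[OF twisted_conj_equiv[OF assms(1,2)]] by blast
    with \<open>s \<in> S\<close> show "Y \<in> (\<lambda>s. twisted_conj G \<phi> `` {s}) ` S"
      by blast
  qed
  then show ?thesis
    using finite_surj[OF assms(3)] by blast
qed

(* On each pair of coordinates (2j, 2j+1) this is the matrix [[0,-1],[1,-1]]. *)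
definition rot :: "(nat \<Rightarrow> int) \<Rightarrow> nat \<Rightarrow> int" where
  "rot v i = (if even i then - v (Suc i) else v (i - 1) - v i)"

lemma rot_rot_rot [simp]: "rot (rot (rot v)) = v"
  by (rule ext) (simp add: rot_def)

lemma rot_sum_zero: "v i + rot v i + rot (rot v) i = 0"
  by (simp add: rot_def)

lemma rot_add: "rot (\<lambda>i. a i + b i) = (\<lambda>i. rot a i + rot b i)"
  and rot_diff: "rot (\<lambda>i. a i - b i) = (\<lambda>i. rot a i - rot b i)"
  by (auto simp: rot_def)

lemma inj_rot: "inj rot"
  by (rule injI) (metis rot_rot_rot)

lemma rot_in_Zvec:
  assumes "even d" "v \<in> Zvec d"
  shows "rot v \<in> Zvec d"
proof -
  have "d \<le> i - 1" if "odd i" "d \<le> i" for i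
    using that assms(1) by (cases "i = d") auto
  then show ?thesis
    using assms(2) by (auto simp: Zvec_def rot_def)
qed

lemma rot_in_Zvec_iff: "even d \<Longrightarrow> rot v \<in> Zvec d \<longleftrightarrow> v \<in> Zvec d"
  using rot_in_Zvec[of d v] rot_in_Zvec[of d "rot v"] rot_in_Zvec[of d "rot (rot v)"] by auto

definition rot_aut :: "nat \<Rightarrow> ((nat \<Rightarrow> int) \<Rightarrow> int) \<times> (nat \<Rightarrow> int) \<Rightarrow> ((nat \<Rightarrow> int) \<Rightarrow> int) \<times> (nat \<Rightarrow> int)" where
  "rot_aut q = (\<lambda>(f, v). ((\<lambda>x. (- f (rot (rot x))) mod int q), rot v))"

lemma rot_aut_hom:
  assumes "q > 0" "even d"
  shows "rot_aut q \<in> hom (wreath q d) (wreath q d)"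
proof (rule homI)
  fix g assume "g \<in> carrier (wreath q d)"
  then obtain f v where g: "g = (f, v)" and f: "f \<in> lamps q d" and v: "v \<in> Zvec d"
    by (auto simp: wreath_carrier)
  have "(\<lambda>x. (- f (rot (rot x))) mod int q) \<in> lamps q d"
    using assms(2) inj_compose[OF inj_rot inj_rot]
    by (intro lamps_neg_comp[OF assms(1) f]) (simp_all add: comp_def rot_in_Zvec_iff)
  then show "rot_aut q g \<in> carrier (wreath q d)"
    using assms(2) v by (simp add: g rot_aut_def wreath_carrier rot_in_Zvec_iff)
next
  fix g h :: "((nat \<Rightarrow> int) \<Rightarrow> int) \<times> (nat \<Rightarrow> int)"
  obtain f v f' v' where gh: "g = (f, v)" "h = (f', v')"
    by (metis surj_pair)
  have shift: "rot (rot (\<lambda>i. x i - rot v i)) = (\<lambda>i. rot (rot x) i - v i)" for x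
    by (simp add: rot_diff)
  have neg_mod_add: "(- ((a + b) mod int q)) mod int q = ((- a) mod int q + (- b) mod int q) mod int q"
    for a b by (simp add: mod_add_eq mod_minus_eq)
  show "rot_aut q (g \<otimes>\<^bsub>wreath q d\<^esub> h) = rot_aut q g \<otimes>\<^bsub>wreath q d\<^esub> rot_aut q h"
    by (simp add: gh rot_aut_def wreath_mult rot_add shift neg_mod_add)
qed

lemma rot_aut_iso:
  assumes "q > 0" "even d"
  shows "rot_aut q \<in> iso (wreath q d) (wreath q d)"
proof -
  define rot_aut_inv where
    "rot_aut_inv = (\<lambda>(f, v). ((\<lambda>x. (- f (rot x)) mod int q), rot (rot v)))"
  have inv_closed: "rot_aut_inv g \<in> carrier (wreath q d)" if g_in: "g \<in> carrier (wreath q d)" for g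
  proof -
    obtain f v where g: "g = (f, v)" and f: "f \<in> lamps q d" and v: "v \<in> Zvec d"
      using g_in by (auto simp: wreath_carrier)
    have "(\<lambda>x. (- f (rot x)) mod int q) \<in> lamps q d"
      using assms(2) by (intro lamps_neg_comp[OF assms(1) f inj_rot]) (simp add: rot_in_Zvec_iff)
    then show ?thesis
      using assms(2) v by (simp add: g rot_aut_inv_def wreath_carrier rot_in_Zvec_iff)
  qed
  have "bij_betw (rot_aut q) (carrier (wreath q d)) (carrier (wreath q d))"
  proof (rule bij_betwI[where g = rot_aut_inv])
    show "rot_aut q \<in> carrier (wreath q d) \<rightarrow> carrier (wreath q d)"
      using rot_aut_hom[OF assms] by (auto simp: hom_def)
    show "rot_aut_inv \<in> carrier (wreath q d) \<rightarrow> carrier (wreath q d)"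
      using inv_closed by blast
  qed (auto simp: rot_aut_def rot_aut_inv_def wreath_carrier mod_minus_eq lamps_mod)
  then show ?thesis
    using rot_aut_hom[OF assms] by (simp add: iso_def)
qed

(* On one coordinate pair, (a, b) \<mapsto> (a + b) mod 3 identifies the cokernel of I - rot
   with Z/3; rot_coker_lift v is a w with (I - rot) w = v - rot_coker_rep v. *)
definition rot_coker_rep :: "(nat \<Rightarrow> int) \<Rightarrow> nat \<Rightarrow> int" where
  "rot_coker_rep v i = (if even i then (v i + v (Suc i)) mod 3 else 0)"

definition rot_coker_lift :: "(nat \<Rightarrow> int) \<Rightarrow> nat \<Rightarrow> int" where
  "rot_coker_lift v i =
     (if even i then v i - (v i + v (Suc i)) mod 3 - (v i + v (Suc i)) div 3
      else (v (i - 1) + v i) div 3)"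

lemma rot_coker_decomp: "v i + rot (rot_coker_lift v) i = rot_coker_lift v i + rot_coker_rep v i"
proof (cases "even i")
  case False
  then obtain b where i: "i = Suc (2 * b)"
    by (auto elim: oddE)
  let ?s = "v (2 * b) + v (Suc (2 * b))"
  have "v i + rot (rot_coker_lift v) i = ?s - ?s mod 3 - 2 * (?s div 3)"
    by (simp add: i rot_def rot_coker_lift_def)
  also have "\<dots> = ?s div 3"
    using div_mult_mod_eq[of ?s 3] by linarith
  also have "\<dots> = rot_coker_lift v i + rot_coker_rep v i"
    by (simp add: i rot_coker_lift_def rot_coker_rep_def)
  finally show ?thesis .
qed (simp add: rot_def rot_coker_lift_def rot_coker_rep_def)

lemma rot_coker_lift_in_Zvec:
  assumes "even d" "v \<in> Zvec d"
  shows "rot_coker_lift v \<in> Zvec d"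
proof -
  have "d \<le> i - 1" if "odd i" "d \<le> i" for i
    using that assms(1) by (cases "i = d") auto
  then show ?thesis
    using assms(2) by (auto simp: Zvec_def rot_coker_lift_def)
qed

lemma rot_coker_rep_in_Zvec: "v \<in> Zvec d \<Longrightarrow> rot_coker_rep v \<in> Zvec d"
  and range_rot_coker_rep: "range (rot_coker_rep v) \<subseteq> {0..2}"
  by (auto simp: Zvec_def rot_coker_rep_def)

lemma order3_twisted_equation_mod:
  fixes f :: "'a \<Rightarrow> int"
  assumes "B (B (B x)) = x" and "2 * c = q + 1"
    and e_def: "\<And>y. e y = (c * (f y - f (B y) + f (B (B y)))) mod q"
  shows "(f x + (- e (B x)) mod q) mod q = e x"
proof -
  have "(f x + (- e (B x)) mod q) mod q = (f x - c * (f (B x) - f (B (B x)) + f x)) mod q"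
    by (simp add: e_def assms(1) mod_add_right_eq mod_minus_eq)
  also have "\<dots> = (c * (f x - f (B x) + f (B (B x))) + (- f x) * q) mod q"
  proof -
    have "f x - c * (f (B x) - f (B (B x)) + f x) = c * (f x - f (B x) + f (B (B x))) + (- f x) * q"
      using arg_cong[OF assms(2), of "\<lambda>t. t * f x"] by (simp add: algebra_simps)
    then show ?thesis
      by simp
  qed
  also have "\<dots> = e x"
    unfolding e_def by (rule mod_mult_self1)
  finally show ?thesis .
qed

lemma lamps_twisted_equation_solvable:
  assumes "odd q" "f \<in> lamps q d" "\<And>x. B (B (B x)) = x" "\<And>x. B x \<in> Zvec d \<Longrightarrow> x \<in> Zvec d"
  obtains e where "e \<in> lamps q d" "\<And>x. (f x + (- e (B x)) mod int q) mod int q = e x"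
proof
  define c :: int where "c = (int q + 1) div 2"
  have c: "2 * c = int q + 1"
    using assms(1) by (auto simp: c_def elim: oddE)
  define e where "e x = (c * (f x - f (B x) + f (B (B x)))) mod int q" for x
  have inj_B: "inj B" and inj_BB: "inj (\<lambda>x. B (B x))"
    by (rule inj_on_inverseI, rule assms(3))+
  have "finite {x. c * (f x - f (B x) + f (B (B x))) \<noteq> 0}"
  proof (rule finite_subset)
    show "finite ({x. f x \<noteq> 0} \<union> {x. f (B x) \<noteq> 0} \<union> {x. f (B (B x)) \<noteq> 0})"
      using assms(2) finite_support_comp[OF _ inj_B, of f] finite_support_comp[OF _ inj_BB, of f]
      by (simp add: lamps_def)
  qed auto
  moreover have "f (B x) = 0" "f (B (B x)) = 0" if "x \<notin> Zvec d" for x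
    using that assms(2) assms(4)[of x] assms(4)[of "B x"] by (auto simp: lamps_def)
  moreover have "q > 0"
    using assms(1) by (rule odd_pos)
  ultimately show "e \<in> lamps q d"
    unfolding e_def using assms(2) by (intro lamps_modI) (auto simp: lamps_def)
  show "(f x + (- e (B x)) mod int q) mod int q = e x" for x
    by (rule order3_twisted_equation_mod[where B = B and f = f and e = e, OF assms(3) c e_def])
qed

lemma rot_aut_twisted_conj_coker_rep:
  assumes "odd q" "even d" "g \<in> carrier (wreath q d)"
  shows "(g, ((\<lambda>x. 0), rot_coker_rep (snd g))) \<in> twisted_conj (wreath q d) (rot_aut q)"
proof -
  obtain f v where g: "g = (f, v)" and f: "f \<in> lamps q d" and v: "v \<in> Zvec d"
    using assms(3) by (auto simp: wreath_carrier)
  have "q > 0"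
    using assms(1) by (rule odd_pos)
  define B where "B x = rot (rot (\<lambda>i. x i - v i))" for x
  have "B (B (B x)) = x" for x
  proof
    fix i show "B (B (B x)) i = x i"
      using rot_sum_zero[of v i] by (simp add: B_def rot_diff)
  qed
  moreover have "x \<in> Zvec d" if "B x \<in> Zvec d" for x
    using that v assms(2) by (simp add: B_def rot_in_Zvec_iff Zvec_diff_iff)
  ultimately obtain e where e: "e \<in> lamps q d"
    and e_eq: "\<And>x. (f x + (- e (B x)) mod int q) mod int q = e x"
    using lamps_twisted_equation_solvable[OF assms(1) f] by blast
  define w where "w = rot_coker_lift v"
  have h: "(e, w) \<in> carrier (wreath q d)"
    using e rot_coker_lift_in_Zvec[OF assms(2) v] by (simp add: wreath_carrier w_def)
  have rep: "((\<lambda>x. 0), rot_coker_rep v) \<in> carrier (wreath q d)"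
    using \<open>q > 0\<close> rot_coker_rep_in_Zvec[OF v] by (simp add: wreath_carrier lamps_def)
  have "(\<lambda>i. v i + rot w i) = (\<lambda>i. w i + rot_coker_rep v i)"
    unfolding w_def using rot_coker_decomp by presburger
  then have "g \<otimes>\<^bsub>wreath q d\<^esub> rot_aut q (e, w) = (e, w) \<otimes>\<^bsub>wreath q d\<^esub> ((\<lambda>x. 0), rot_coker_rep v)"
    using e e_eq by (simp add: g rot_aut_def wreath_mult B_def[symmetric] lamps_mod)
  then show ?thesis
    using wreath_group[OF \<open>q > 0\<close>] rot_aut_hom[OF \<open>q > 0\<close> assms(2)] assms(3) h rep
    by (simp add: g twisted_conjI)
qed

theorem proposition4p6:
  fixes N k :: nat and p s :: "nat \<Rightarrow> nat"
  assumes "N > 0" and "k > 0"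
    and "\<forall>i<N. Factorial_Ring.prime (p i) \<and> p i > 2"
    and "\<forall>i<N. s i > 0"
  shows "\<exists>\<phi>. \<phi> \<in> iso (wreath (\<Prod>i<N. p i ^ s i) (2 * k)) (wreath (\<Prod>i<N. p i ^ s i) (2 * k))
           \<and> finite (reidemeister_classes (wreath (\<Prod>i<N. p i ^ s i) (2 * k)) \<phi>)"
proof -
  define q where "q = (\<Prod>i<N. p i ^ s i)"
  have "odd (p i)" if "i < N" for i
    using assms(3) that prime_odd_nat by blast
  then have "odd q"
    by (simp add: q_def even_prod_iff)
  then have "q > 0"
    by (rule odd_pos)
  let ?G = "wreath q (2 * k)"
  let ?S = "(\<lambda>u. ((\<lambda>x. 0), u)) ` {u \<in> Zvec (2 * k). range u \<subseteq> {0..2}}"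
  have "finite (reidemeister_classes ?G (rot_aut q))"
  proof (rule finite_reidemeister_classesI[OF wreath_group[OF \<open>q > 0\<close>] rot_aut_hom[OF \<open>q > 0\<close>]])
    show "finite ?S"
      by (simp add: finite_Zvec_range)
    show "?S \<subseteq> carrier ?G"
      using \<open>q > 0\<close> by (auto simp: wreath_carrier lamps_def)
    fix g assume g: "g \<in> carrier ?G"
    then have "((\<lambda>x. 0), rot_coker_rep (snd g)) \<in> ?S"
      using rot_coker_rep_in_Zvec range_rot_coker_rep by (auto simp: wreath_carrier)
    moreover have "(g, ((\<lambda>x. 0), rot_coker_rep (snd g))) \<in> twisted_conj ?G (rot_aut q)"
      using rot_aut_twisted_conj_coker_rep[OF \<open>odd q\<close> _ g] by simp
    ultimately show "\<exists>s\<in>?S. (g, s) \<in> twisted_conj ?G (rot_aut q)"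
      by blast
  qed simp
  then show ?thesis
    using rot_aut_iso[OF \<open>q > 0\<close>, of "2 * k"] unfolding q_def by auto
qed

end
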